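(* Let $n\ge2$ and let $\mathsf r=[r_1,\dots,r_{2n-2}]$ be a tree-like factorization of $\lambda_n$, written as $r_\ell=(\!(a_{\ell-1},a_\ell)\!)$ with integers $a_0<a_1<\dots<a_{2n-2}$. Let $k\in\{1,\dots,n-1\}$. Then: (i) if $r_\ell$ occurs strictly before $r^k_1$ or strictly after $r^k_2$ in the sequence, then $a_{\ell-1}\not\equiv k$ and $a_\ell\not\equiv k\pmod n$; (ii) if $r_\ell$ occurs strictly between $r^k_1$ and $r^k_2$, then $a_{\ell-1}\not\equiv \beta_k$ and $a_\ell\not\equiv\beta_k\pmod n$; (iii) $r_\ell=(\!(a_{\ell-1},a_\ell)\!)$ occurs strictly between $r^k_1$ and $r^k_2$ if and only if the reflection $(\!(a_\ell-n,a_{\ell-1})\!)$ also occurs in $\mathsf r$ strictly between $r^k_1$ and $r^k_2$.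
   Context: The affine symmetric group $\widetilde S_n$ is the group, under composition $(vw)(k)=v(w(k))$, of bijections $w:\mathbb Z\to\mathbb Z$ with $w(i+n)=w(i)+n$ and $\sum_{i=1}^n w(i)=\binom{n+1}{2}$. For $i\not\equiv j\pmod n$, $(\!(i,j)\!)$ is the affine reflection interchanging $i+kn$ and $j+kn$ for all $k\in\mathbb Z$; $(\!(i,j)\!)=(\!(j,i)\!)=(\!(i+kn,j+kn)\!)$. Let $\lambda_n$ be the element with $\lambda_n(k)=k+n$ for $k\not\equiv0\pmod n$ and $\lambda_n(k)=k-n(n-1)$ for $k\equiv 0\pmod n$; its reflection length is $2n-2$. $\textsc{fact}(\lambda_n)$ is the set of sequences $[r_1,\dots,r_{2n-2}]$ of reflections with $r_1\cdots r_{2n-2}=\lambda_n$. Such a sequence is tree-like if one can write $r_k=(\!(a_{k-1},b_k)\!)$ with integers $a_{k-1}<b_k$ ($1\le k\le 2n-2$) and $a_k\equiv b_k\pmod n$ ($1\le k\le 2n-3$); equivalently there are integers $a_0<\dots<a_{2n-2}$ with $r_\ell=(\!(a_{\ell-1},a_\ell)\!)$. A reflection $r_\ell$ increases an integer $k$ if $r_\ell r_{\ell+1}\cdots r_{2n-2}(k)>r_{\ell+1}\cdots r_{2n-2}(k)$. For a tree-like $\mathsf r$ and $k\in\{1,\dots,n-1\}$, exactly two reflections of $\mathsf r$ increase $k$; $r^k_1$ denotes the earlier and $r^k_2$ the later of these two in the sequence. Each of them has exactly one endpoint congruent to $k$ modulo $n$, and the other endpoints of $r^k_1$ and $r^k_2$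 are congruent to each other modulo $n$; $\beta_k$ denotes this common residue class modulo $n$. *)

theory Defs
  imports Main
begin

definition affine_perm :: "nat \<Rightarrow> (int \<Rightarrow> int) \<Rightarrow> bool" where
  "affine_perm n w \<longleftrightarrow> bij w \<and> (\<forall>i. w (i + int n) = w i + int n)
     \<and> (\<Sum>i=1..int n. w i) = int n * (int n + 1) div 2"

text \<open>The affine reflection ((i,j)) interchanging i + k n and j + k n for all k
  (meaningful for i, j not congruent mod n).\<close>
definition aff_refl :: "nat \<Rightarrow> int \<Rightarrow> int \<Rightarrow> int \<Rightarrow> int" where
  "aff_refl n i j = (\<lambda>x. if x mod int n = i mod int n then x - i + j
                        else if x mod int n = j mod int n then x - j + i
                        else x)"

definition is_aff_refl :: "nat \<Rightarrow> (int \<Rightarrow> int) \<Rightarrow> bool" where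
  "is_aff_refl n w \<longleftrightarrow> (\<exists>i j. i mod int n \<noteq> j mod int n \<and> w = aff_refl n i j)"

definition lambda_aff :: "nat \<Rightarrow> int \<Rightarrow> int" where
  "lambda_aff n k = (if k mod int n = 0 then k - int n * (int n - 1) else k + int n)"

definition seq_prod :: "(int \<Rightarrow> int) list \<Rightarrow> int \<Rightarrow> int" where
  "seq_prod rs = foldr (\<circ>) rs id"

text \<open>fact(lambda_n): sequences of 2n-2 reflections with product lambda_n
  (2n-2 being the reflection length of lambda_n).\<close>
definition fact_lambda :: "nat \<Rightarrow> (int \<Rightarrow> int) list set" where
  "fact_lambda n = {rs. length rs = 2 * n - 2 \<and> (\<forall>r \<in> set rs. is_aff_refl n r)
                        \<and> seq_prod rs = lambda_aff n}"

text \<open>Tree-like with witnessing integers a_0 < ... < a_{2n-2}, r_l = ((a_{l-1}, a_l));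
  the sequence is 1-indexed: r_l = rs ! (l - 1).\<close>
definition tree_like_wit :: "nat \<Rightarrow> (int \<Rightarrow> int) list \<Rightarrow> (nat \<Rightarrow> int) \<Rightarrow> bool" where
  "tree_like_wit n rs a \<longleftrightarrow>
     (\<forall>l \<in> {1..length rs}. a (l - 1) < a l \<and> a (l - 1) mod int n \<noteq> a l mod int n
                            \<and> rs ! (l - 1) = aff_refl n (a (l - 1)) (a l))"

definition increases :: "(int \<Rightarrow> int) list \<Rightarrow> nat \<Rightarrow> int \<Rightarrow> bool" where
  "increases rs l k \<longleftrightarrow> (rs ! (l - 1)) (seq_prod (drop l rs) k) > seq_prod (drop l rs) k"

end

theory Submission
  imports Defs
begin

text \<open>Write w_j = r_(j+1) ... r_m, so that w_m = id and w_0 = lambda_n.  A point lying in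
  the class of a_j at time j is carried along a_j, a_(j-1), ..., a_0; applied to a_m this
  gives lambda_n(a_m) = a_0 < a_m, whence a_0 = a_m = 0 mod n, and it shows that the orbit
  w_j(c) of any c not divisible by n never meets the class of a_j.  So r_l either fixes
  w_l(c) or raises it by a_l - a_(l-1), exactly when r_l increases c, and these increments
  add up to lambda_n(c) - c = n.  As w_l permutes the residues, every r_l increases exactly
  one c in {1..n-1}; no increment is divisible by n, so every c is increased at least twice,
  and counting the 2n - 2 reflections, exactly twice.  The residue of w_j(c) is beta_c
  between the two increases and c elsewhere; this gives (i) and (ii), and it shows that
  r^c_1 and r^c_2 are each other's partner, the partner of ((a_(l-1), a_l)) being
  ((a_l - n, a_(l-1))).  For (iii), the intervals [r^c_1, r^c_2] are nested: a position
  strictly inside carrying the class c is the right end of a child interval whose left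
  end again carries c, so the child intervals tile the inside.\<close>

lemma aff_refl_apply_left:
  "z mod int n = i mod int n \<Longrightarrow> aff_refl n i j z = z - i + j"
  by (simp add: aff_refl_def)

lemma aff_refl_apply_right:
  "i mod int n \<noteq> j mod int n \<Longrightarrow> z mod int n = j mod int n \<Longrightarrow> aff_refl n i j z = z - j + i"
  by (simp add: aff_refl_def)

lemma aff_refl_apply_other:
  "z mod int n \<noteq> i mod int n \<Longrightarrow> z mod int n \<noteq> j mod int n \<Longrightarrow> aff_refl n i j z = z"
  by (simp add: aff_refl_def)

lemma aff_refl_eq_self_iff:
  "i mod int n \<noteq> j mod int n \<Longrightarrow>
     aff_refl n i j z = z \<longleftrightarrow> z mod int n \<noteq> i mod int n \<and> z mod int n \<noteq> j mod int n"
  by (auto simp: aff_refl_def)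

lemma aff_refl_periodic: "aff_refl n i j (z + int n) = aff_refl n i j z + int n"
  by (simp add: aff_refl_def)

lemma aff_refl_involutive:
  assumes "i mod int n \<noteq> j mod int n"
  shows "aff_refl n i j (aff_refl n i j z) = z"
proof -
  have moved: "(z - x + y) mod int n = y mod int n" if "z mod int n = x mod int n" for x y
    using that by (simp add: mod_eq_dvd_iff)
  show ?thesis
    using assms moved[of i j] moved[of j i] by (auto simp: aff_refl_def)
qed

lemma aff_refl_cong:
  assumes "x' mod int n = x mod int n" and "y' - x' = y - x"
  shows "aff_refl n x' y' = aff_refl n x y"
proof -
  have "y' - y = x' - x"
    using assms(2) by linarith
  then have "y' mod int n = y mod int n"
    using assms(1) by (metis mod_eq_dvd_iff)
  then show ?thesis
    using assms by (auto simp: aff_refl_def fun_eq_iff algebra_simps)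
qed

lemma aff_refl_residues_eq:
  assumes "i mod int n \<noteq> j mod int n" and "i' mod int n \<noteq> j' mod int n"
    and "aff_refl n i j = aff_refl n i' j'"
  shows "{i mod int n, j mod int n} = {i' mod int n, j' mod int n}"
proof -
  have "z mod int n \<in> {i mod int n, j mod int n} \<longleftrightarrow> z mod int n \<in> {i' mod int n, j' mod int n}" for z
    using aff_refl_eq_self_iff[OF assms(1), of z] aff_refl_eq_self_iff[OF assms(2), of z] assms(3)
    by auto
  from this[of i] this[of j] this[of i'] this[of j'] show ?thesis
    by auto
qed

lemma is_aff_refl_periodic: "is_aff_refl n r \<Longrightarrow> r (z + int n) = r z + int n"
  by (auto simp: is_aff_refl_def aff_refl_periodic)

lemma inj_is_aff_refl: "is_aff_refl n r \<Longrightarrow> inj r"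
  unfolding is_aff_refl_def by (metis aff_refl_involutive injI)

lemma lambda_aff_mod: "lambda_aff n x mod int n = x mod int n"
  by (simp add: lambda_aff_def mod_eq_dvd_iff)

lemma seq_prod_Nil [simp]: "seq_prod [] = id"
  by (simp add: seq_prod_def)

lemma seq_prod_Cons [simp]: "seq_prod (r # rs) = r \<circ> seq_prod rs"
  by (simp add: seq_prod_def)

lemma seq_prod_shift:
  "(\<And>r z. r \<in> set rs \<Longrightarrow> r (z + c) = r z + c) \<Longrightarrow> seq_prod rs (z + c) = seq_prod rs z + c"
  by (induction rs arbitrary: z) auto

lemma inj_seq_prod: "(\<And>r. r \<in> set rs \<Longrightarrow> inj r) \<Longrightarrow> inj (seq_prod rs)"
  by (induction rs) (auto intro: inj_compose)

lemma shift_mult: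
  fixes f :: "int \<Rightarrow> int"
  assumes shift: "\<And>z. f (z + c) = f z + c"
  shows "f (z + t * c) = f z + t * c"
proof (induction t rule: int_induct[where k = 0])
  case (step1 t)
  then show ?case
    using shift[of "z + t * c"] by (simp add: algebra_simps)
next
  case (step2 t)
  then show ?case
    using shift[of "z + (t - 1) * c"] by (simp add: algebra_simps)
qed simp

lemma inj_shift_mod_eq_iff:
  fixes f :: "int \<Rightarrow> int"
  assumes "inj f" and shift: "\<And>z. f (z + N) = f z + N"
  shows "f x mod N = f y mod N \<longleftrightarrow> x mod N = y mod N"
proof
  assume "f x mod N = f y mod N"
  then obtain t where "f x - f y = N * t"
    by (metis mod_eq_dvd_iff dvdE)
  then have "f x = f (y + t * N)"
    using shift_mult[of f N y t, OF shift] by (simp add: algebra_simps)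
  then have "x = y + t * N"
    using assms(1) by (simp add: inj_def)
  then show "x mod N = y mod N"
    by simp
next
  assume "x mod N = y mod N"
  then obtain t where "x - y = N * t"
    by (metis mod_eq_dvd_iff dvdE)
  then have "x = y + t * N"
    by (simp add: algebra_simps)
  then show "f x mod N = f y mod N"
    using shift_mult[of f N, OF shift] by simp
qed

locale tree_like_factorization =
  fixes n :: nat and rs :: "(int \<Rightarrow> int) list" and a :: "nat \<Rightarrow> int"
  assumes two_le_n: "2 \<le> n"
    and factorization: "rs \<in> fact_lambda n"
    and tree_like: "tree_like_wit n rs a"
begin

abbreviation m :: nat where "m \<equiv> 2 * n - 2"

definition suffix_prod :: "nat \<Rightarrow> int \<Rightarrow> int" where
  "suffix_prod j = seq_prod (drop j rs)"

definition gap :: "nat \<Rightarrow> int" where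
  "gap l = a l - a (l - 1)"

lemma length_rs: "length rs = m"
  using factorization by (simp add: fact_lambda_def)

lemma a_step:
  assumes "1 \<le> l" and "l \<le> m"
  shows "a (l - 1) < a l" and "a (l - 1) mod int n \<noteq> a l mod int n"
    and "rs ! (l - 1) = aff_refl n (a (l - 1)) (a l)"
  using tree_like assms by (auto simp: tree_like_wit_def length_rs)

lemma gap_pos: "1 \<le> l \<Longrightarrow> l \<le> m \<Longrightarrow> 0 < gap l"
  using a_step(1) by (simp add: gap_def)

lemma gap_mod_ne_0:
  assumes "1 \<le> l" and "l \<le> m"
  shows "gap l mod int n \<noteq> 0"
proof -
  have "\<not> int n dvd a l - a (l - 1)"
    using a_step(2)[OF assms] by (metis mod_eq_dvd_iff)
  then show ?thesis
    by (simp add: gap_def dvd_eq_mod_eq_0)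
qed

lemma a_strict_mono: "i < j \<Longrightarrow> j \<le> m \<Longrightarrow> a i < a j"
proof (induction j)
  case (Suc j)
  then show ?case using a_step(1)[of "Suc j"] by (cases "i = j") auto
qed simp

lemma suffix_prod_m: "suffix_prod m = id"
  by (simp add: suffix_prod_def length_rs)

lemma suffix_prod_0: "suffix_prod 0 = lambda_aff n"
  using factorization by (simp add: suffix_prod_def fact_lambda_def)

lemma suffix_prod_pred:
  assumes "1 \<le> l" and "l \<le> m"
  shows "suffix_prod (l - 1) = aff_refl n (a (l - 1)) (a l) \<circ> suffix_prod l"
proof -
  have "drop (l - 1) rs = rs ! (l - 1) # drop l rs"
    using Cons_nth_drop_Suc[of "l - 1" rs] assms length_rs by simp
  then show ?thesis
    using a_step(3)[OF assms] by (simp add: suffix_prod_def)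
qed

lemma suffix_prod_shift: "suffix_prod j (z + int n) = suffix_prod j z + int n"
  unfolding suffix_prod_def
  by (rule seq_prod_shift)
    (use factorization in \<open>auto simp: fact_lambda_def dest: in_set_dropD is_aff_refl_periodic\<close>)

lemma suffix_prod_mod_eq_iff:
  "suffix_prod j x mod int n = suffix_prod j y mod int n \<longleftrightarrow> x mod int n = y mod int n"
proof -
  have inj: "inj (suffix_prod j)"
    unfolding suffix_prod_def
    by (rule inj_seq_prod)
      (use factorization in \<open>auto simp: fact_lambda_def dest: in_set_dropD inj_is_aff_refl\<close>)
  then show ?thesis
    using inj_shift_mod_eq_iff suffix_prod_shift by blast
qed

lemma suffix_prod_follows_a:
  assumes "j \<le> m" and "suffix_prod j x mod int n = a j mod int n" and "i \<le> j"
  shows "suffix_prod i x = suffix_prod j x - a j + a i"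
  using assms(3)
proof (induction i rule: inc_induct)
  case (step k)
  have k: "1 \<le> Suc k" "Suc k \<le> m"
    using step.hyps assms(1) by auto
  have "suffix_prod (Suc k) x mod int n = a (Suc k) mod int n"
    using step.IH assms(2) by (simp add: mod_eq_dvd_iff)
  then show ?case
    using suffix_prod_pred[OF k] aff_refl_apply_right[OF a_step(2)[OF k]] step.IH by simp
qed simp

lemma a_m_mod: "a m mod int n = 0" and a_0_mod: "a 0 mod int n = 0"
proof -
  have lambda_a_m: "lambda_aff n (a m) = a 0"
    using suffix_prod_follows_a[of m "a m" 0] suffix_prod_m suffix_prod_0 by simp
  moreover have "a 0 < a m"
    using a_strict_mono[of 0 m] two_le_n by simp
  ultimately show "a m mod int n = 0"
    by (auto simp: lambda_aff_def split: if_splits)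
  with lambda_a_m show "a 0 mod int n = 0"
    using lambda_aff_mod by metis
qed

lemma suffix_prod_mod_eq_a_iff:
  assumes "j \<le> m"
  shows "suffix_prod j c mod int n = a j mod int n \<longleftrightarrow> c mod int n = 0"
proof
  assume "suffix_prod j c mod int n = a j mod int n"
  then have "suffix_prod 0 c mod int n = a 0 mod int n"
    using suffix_prod_follows_a[OF assms, of c 0] by (simp add: mod_eq_dvd_iff)
  then show "c mod int n = 0"
    using suffix_prod_0 lambda_aff_mod a_0_mod by simp
next
  assume c: "c mod int n = 0"
  have "suffix_prod j 0 = a j - a m"
    using suffix_prod_follows_a[of m 0 j] suffix_prod_m a_m_mod assms by simp
  then have "suffix_prod j 0 mod int n = a j mod int n"
    using a_m_mod by (metis mod_diff_right_eq diff_zero)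
  then show "suffix_prod j c mod int n = a j mod int n"
    using suffix_prod_mod_eq_iff[of j c 0] c by simp
qed

lemma suffix_prod_pred_apply:
  assumes "c mod int n \<noteq> 0" and "1 \<le> l" and "l \<le> m"
  shows "suffix_prod (l - 1) c =
    (if suffix_prod l c mod int n = a (l - 1) mod int n then suffix_prod l c + gap l
     else suffix_prod l c)"
  using suffix_prod_pred[OF assms(2,3)] aff_refl_apply_left aff_refl_apply_other
    suffix_prod_mod_eq_a_iff[OF assms(3), of c] assms(1)
  by (auto simp: gap_def)

lemma increases_iff:
  assumes "c mod int n \<noteq> 0" and "1 \<le> l" and "l \<le> m"
  shows "increases rs l c \<longleftrightarrow> suffix_prod l c mod int n = a (l - 1) mod int n"
proof -
  have "increases rs l c \<longleftrightarrow> suffix_prod l c < suffix_prod (l - 1) c"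
    using suffix_prod_pred[OF assms(2,3)] a_step(3)[OF assms(2,3)]
    by (simp add: increases_def suffix_prod_def)
  then show ?thesis
    using suffix_prod_pred_apply[OF assms] gap_pos[OF assms(2,3)] by auto
qed

definition incr_steps :: "int \<Rightarrow> nat set" where
  "incr_steps c = {l \<in> {1..m}. increases rs l c}"

lemma finite_incr_steps [simp]: "finite (incr_steps c)"
  by (simp add: incr_steps_def)

lemma suffix_prod_eq_sum:
  assumes "c mod int n \<noteq> 0" and "j \<le> m"
  shows "suffix_prod j c = c + (\<Sum>l \<in> incr_steps c \<inter> {j<..}. gap l)"
  using assms(2)
proof (induction j rule: inc_induct)
  case base
  have "incr_steps c \<inter> {m<..} = {}"
    by (auto simp: incr_steps_def)
  then show ?case
    by (simp add: suffix_prod_m)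
next
  case (step j)
  have l: "1 \<le> Suc j" "Suc j \<le> m"
    using step.hyps by auto
  have steps: "incr_steps c \<inter> {j<..} =
      (if increases rs (Suc j) c then insert (Suc j) else id) (incr_steps c \<inter> {Suc j<..})"
    using l by (auto simp: incr_steps_def) (metis Suc_lessI)
  show ?case
    using suffix_prod_pred_apply[OF assms(1) l] increases_iff[OF assms(1) l] step.IH
    by (simp add: steps)
qed

lemma sum_gap_incr_steps:
  assumes "c \<in> {1..<int n}"
  shows "(\<Sum>l \<in> incr_steps c. gap l) = int n"
proof -
  have "incr_steps c \<inter> {0<..} = incr_steps c"
    by (auto simp: incr_steps_def)
  moreover have "c mod int n \<noteq> 0"
    using assms by simp
  ultimately show ?thesis
    using suffix_prod_eq_sum[of c 0] suffix_prod_0 by (simp add: lambda_aff_def)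
qed

lemma ex1_increases:
  assumes "1 \<le> l" and "l \<le> m"
  shows "\<exists>!c. c \<in> {1..<int n} \<and> increases rs l c"
proof -
  \<comment> \<open>w_l permutes the residues, and sends 0 to the class of a_l, not of a_(l-1)\<close>
  let ?f = "\<lambda>c. suffix_prod l c mod int n"
  have "inj_on ?f {0..<int n}"
    by (rule inj_onI) (simp add: suffix_prod_mod_eq_iff)
  moreover have "?f ` {0..<int n} \<subseteq> {0..<int n}"
    using two_le_n by auto
  ultimately have surj: "?f ` {0..<int n} = {0..<int n}"
    using endo_inj_surj finite_atLeastLessThan_int by blast
  have "a (l - 1) mod int n \<in> ?f ` {0..<int n}"
    unfolding surj using two_le_n by simp
  then obtain c where c: "c \<in> {0..<int n}" "a (l - 1) mod int n = ?f c"
    by (rule imageE)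
  have "c \<noteq> 0"
    using c(2) suffix_prod_mod_eq_a_iff[OF assms(2), of 0] a_step(2)[OF assms] by force
  with c have "c \<in> {1..<int n} \<and> increases rs l c"
    using increases_iff[OF _ assms, of c] by simp
  moreover have "c' = c''"
    if "c' \<in> {1..<int n}" "increases rs l c'" "c'' \<in> {1..<int n}" "increases rs l c''" for c' c''
  proof -
    have "?f c' = ?f c''"
      using that increases_iff[OF _ assms, of c'] increases_iff[OF _ assms, of c''] by simp
    then have "c' mod int n = c'' mod int n"
      by (simp add: suffix_prod_mod_eq_iff)
    then show ?thesis
      using that by simp
  qed
  ultimately show ?thesis
    by blast
qed

definition owner :: "nat \<Rightarrow> int" where
  "owner l = (THE c. c \<in> {1..<int n} \<and> increases rs l c)"

lemma owner_range: "1 \<le> l \<Longrightarrow> l \<le> m \<Longrightarrow> owner l \<in> {1..<int n}"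
  and increases_owner: "1 \<le> l \<Longrightarrow> l \<le> m \<Longrightarrow> increases rs l (owner l)"
  using theI'[OF ex1_increases] by (simp_all add: owner_def)

lemma owner_eqI: "c \<in> {1..<int n} \<Longrightarrow> l \<in> incr_steps c \<Longrightarrow> owner l = c"
  unfolding owner_def incr_steps_def using ex1_increases by (auto intro: the1_equality)

lemma incr_steps_eq_owner: "c \<in> {1..<int n} \<Longrightarrow> incr_steps c = {l \<in> {1..m}. owner l = c}"
  using owner_range increases_owner owner_eqI by (auto simp: incr_steps_def)

lemma sum_card_incr_steps: "(\<Sum>c \<in> {1..<int n}. card (incr_steps c)) = m"
proof -
  have "(\<Sum>c \<in> {1..<int n}. card (incr_steps c)) =
      (\<Sum>c \<in> {1..<int n}. \<Sum>l \<in> {l \<in> {1..m}. owner l = c}. 1)"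
    by (simp add: incr_steps_eq_owner)
  also have "\<dots> = (\<Sum>l \<in> {1..m}. 1)"
  proof (rule sum.group)
    show "owner ` {1..m} \<subseteq> {1..<int n}"
      using owner_range by force
  qed simp_all
  finally show ?thesis
    by simp
qed

lemma two_le_card_incr_steps:
  assumes "c \<in> {1..<int n}"
  shows "2 \<le> card (incr_steps c)"
proof (rule ccontr)
  assume "\<not> 2 \<le> card (incr_steps c)"
  then consider "incr_steps c = {}" | l where "incr_steps c = {l}"
    by (metis One_nat_def card_1_singletonE finite_incr_steps card_0_eq less_2_cases not_le)
  then show False
  proof cases
    case 1
    then show False
      using sum_gap_incr_steps[OF assms] two_le_n by simp
  next
    case (2 l)
    then have "gap l = int n" "1 \<le> l" "l \<le> m"
      using sum_gap_incr_steps[OF assms] by (auto simp: incr_steps_def)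
    then show False
      using gap_mod_ne_0[of l] by simp
  qed
qed

lemma card_incr_steps:
  assumes "c \<in> {1..<int n}"
  shows "card (incr_steps c) = 2"
proof -
  have "(\<Sum>c \<in> {1..<int n}. 2) = (\<Sum>c \<in> {1..<int n}. card (incr_steps c))"
    using sum_card_incr_steps two_le_n by simp
  from sum_mono_inv[OF this two_le_card_incr_steps assms] show ?thesis
    by simp
qed

text \<open>The positions of r^c_1 and r^c_2; \<open>beta c\<close> is an integer in the class beta_c.\<close>

definition p1 :: "int \<Rightarrow> nat" where
  "p1 c = Min (incr_steps c)"

definition p2 :: "int \<Rightarrow> nat" where
  "p2 c = Max (incr_steps c)"

lemma incr_steps_eq:
  assumes "c \<in> {1..<int n}"
  shows "incr_steps c = {p1 c, p2 c}" and "1 \<le> p1 c" and "p1 c < p2 c" and "p2 c \<le> m"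
proof -
  obtain x y where xy: "incr_steps c = {x, y}" "x < y"
    using card_incr_steps[OF assms] by (metis card_2_iff linorder_neqE_nat insert_commute)
  then have "p1 c = x" "p2 c = y"
    by (auto simp: p1_def p2_def)
  with xy show "incr_steps c = {p1 c, p2 c}" "p1 c < p2 c" "1 \<le> p1 c" "p2 c \<le> m"
    by (auto simp: incr_steps_def)
qed

lemma owner_step:
  assumes "1 \<le> l" and "l \<le> m"
  shows "l = p1 (owner l) \<or> l = p2 (owner l)"
proof -
  have "l \<in> incr_steps (owner l)"
    using increases_owner[OF assms] assms by (simp add: incr_steps_def)
  then show ?thesis
    using incr_steps_eq(1)[OF owner_range[OF assms]] by simp
qed

lemma owner_p1: "c \<in> {1..<int n} \<Longrightarrow> owner (p1 c) = c"
  and owner_p2: "c \<in> {1..<int n} \<Longrightarrow> owner (p2 c) = c"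
  using owner_eqI incr_steps_eq(1) by blast+

lemma increases_p1: "c \<in> {1..<int n} \<Longrightarrow> increases rs (p1 c) c"
  and increases_p2: "c \<in> {1..<int n} \<Longrightarrow> increases rs (p2 c) c"
  using incr_steps_eq(1)[of c] unfolding incr_steps_def by blast+

lemma gap_p1_p2:
  assumes "c \<in> {1..<int n}"
  shows "gap (p1 c) + gap (p2 c) = int n"
  using sum_gap_incr_steps[OF assms] incr_steps_eq[OF assms] by simp

lemma suffix_prod_eq:
  assumes "c \<in> {1..<int n}" and "j \<le> m"
  shows "suffix_prod j c = c + (if j < p1 c then int n else if j < p2 c then gap (p2 c) else 0)"
proof -
  note steps = incr_steps_eq[OF assms(1)]
  have "c mod int n \<noteq> 0"
    using assms(1) by simp
  then have sum: "suffix_prod j c = c + (\<Sum>l \<in> {p1 c, p2 c} \<inter> {j<..}. gap l)"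
    using suffix_prod_eq_sum[OF _ assms(2)] steps(1) by simp
  consider "j < p1 c" | "p1 c \<le> j" "j < p2 c" | "p2 c \<le> j"
    by linarith
  then show ?thesis
  proof cases
    case 1
    then have "{p1 c, p2 c} \<inter> {j<..} = {p1 c, p2 c}"
      using steps(3) by auto
    then show ?thesis
      using sum 1 steps(3) gap_p1_p2[OF assms(1)] by simp
  next
    case 2
    then have "{p1 c, p2 c} \<inter> {j<..} = {p2 c}"
      by auto
    then show ?thesis
      using sum 2 by simp
  next
    case 3
    then have "{p1 c, p2 c} \<inter> {j<..} = {}"
      using steps(3) by auto
    then show ?thesis
      using sum 3 steps(3) by simp
  qed
qed

definition beta :: "int \<Rightarrow> int" where
  "beta c = a (p2 c)"

lemma a_p2_pred_mod:
  assumes "c \<in> {1..<int n}"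
  shows "a (p2 c - 1) mod int n = c mod int n"
proof -
  note steps = incr_steps_eq[OF assms]
  have "suffix_prod (p2 c) c = c"
    using suffix_prod_eq[OF assms steps(4)] steps(3) by simp
  then show ?thesis
    using increases_iff[of c "p2 c"] increases_p2[OF assms] steps assms by simp
qed

lemma beta_mod:
  assumes "c \<in> {1..<int n}"
  shows "beta c mod int n = (c + gap (p2 c)) mod int n"
proof -
  have "beta c = a (p2 c - 1) + gap (p2 c)"
    by (simp add: beta_def gap_def)
  then show ?thesis
    using mod_add_cong[OF a_p2_pred_mod[OF assms] refl] by simp
qed

lemma suffix_prod_mod:
  assumes "c \<in> {1..<int n}" and "j \<le> m"
  shows "suffix_prod j c mod int n = (if p1 c \<le> j \<and> j < p2 c then beta c else c) mod int n"
  using suffix_prod_eq[OF assms] beta_mod[OF assms(1)] by simp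

lemma a_p1_pred_mod:
  assumes "c \<in> {1..<int n}"
  shows "a (p1 c - 1) mod int n = beta c mod int n"
proof -
  note steps = incr_steps_eq[OF assms]
  have "suffix_prod (p1 c) c mod int n = beta c mod int n"
    using suffix_prod_mod[OF assms, of "p1 c"] steps by simp
  then show ?thesis
    using increases_iff[of c "p1 c"] increases_p1[OF assms] steps assms by simp
qed

lemma a_p1_mod:
  assumes "c \<in> {1..<int n}"
  shows "a (p1 c) mod int n = c mod int n"
proof -
  have "a (p1 c) = a (p1 c - 1) + gap (p1 c)"
    by (simp add: gap_def)
  also have "\<dots> mod int n = (c + gap (p2 c) + gap (p1 c)) mod int n"
    using a_p1_pred_mod[OF assms] beta_mod[OF assms] by (intro mod_add_cong) simp_all
  also have "\<dots> = (c + int n) mod int n"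
    using gap_p1_p2[OF assms] by (simp add: algebra_simps)
  finally show ?thesis
    by simp
qed

lemma step_residues:
  assumes "1 \<le> l" and "l \<le> m"
  shows "{a (l - 1) mod int n, a l mod int n} = {owner l mod int n, beta (owner l) mod int n}"
proof -
  have y: "owner l \<in> {1..<int n}"
    using owner_range[OF assms] .
  from owner_step[OF assms] show ?thesis
  proof
    assume "l = p1 (owner l)"
    then show ?thesis
      using a_p1_pred_mod[OF y] a_p1_mod[OF y] by (simp add: insert_commute)
  next
    assume "l = p2 (owner l)"
    then show ?thesis
      using a_p2_pred_mod[OF y] by (simp add: beta_def)
  qed
qed

lemma not_increases_residues:
  assumes "c mod int n \<noteq> 0" and "1 \<le> l" and "l \<le> m" and "\<not> increases rs l c"
  shows "a (l - 1) mod int n \<noteq> suffix_prod l c mod int n"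
    and "a l mod int n \<noteq> suffix_prod l c mod int n"
  using increases_iff[OF assms(1-3)] suffix_prod_mod_eq_a_iff[OF assms(3), of c] assms(1,4)
  by auto

lemma residues_outside:
  assumes "c \<in> {1..<int n}" and "1 \<le> l" and "l \<le> m" and "l < p1 c \<or> p2 c < l"
  shows "a (l - 1) mod int n \<noteq> c mod int n \<and> a l mod int n \<noteq> c mod int n"
proof -
  have "l \<notin> incr_steps c"
    using incr_steps_eq[OF assms(1)] assms(4) by auto
  then have "\<not> increases rs l c"
    using assms(2,3) by (simp add: incr_steps_def)
  moreover have "suffix_prod l c mod int n = c mod int n"
    using suffix_prod_mod[OF assms(1,3)] assms(4) by auto
  moreover have "c mod int n \<noteq> 0"
    using assms(1) by simp
  ultimately show ?thesis
    using not_increases_residues[OF _ assms(2,3)] by metis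
qed

lemma residues_between:
  assumes "c \<in> {1..<int n}" and "p1 c < l" and "l < p2 c"
  shows "a (l - 1) mod int n \<noteq> beta c mod int n \<and> a l mod int n \<noteq> beta c mod int n"
proof -
  have l: "1 \<le> l" "l \<le> m"
    using incr_steps_eq[OF assms(1)] assms(2,3) by auto
  have "l \<notin> incr_steps c"
    using incr_steps_eq(1)[OF assms(1)] assms(2,3) by auto
  then have "\<not> increases rs l c"
    using l by (simp add: incr_steps_def)
  moreover have "suffix_prod l c mod int n = beta c mod int n"
    using suffix_prod_mod[OF assms(1) l(2)] assms(2,3) by simp
  moreover have "c mod int n \<noteq> 0"
    using assms(1) by simp
  ultimately show ?thesis
    using not_increases_residues[OF _ l] by metis
qed

lemma rs_p1:
  assumes "c \<in> {1..<int n}"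
  shows "rs ! (p1 c - 1) = aff_refl n (a (p2 c) - int n) (a (p2 c - 1))"
proof -
  have "rs ! (p1 c - 1) = aff_refl n (a (p1 c - 1)) (a (p1 c))"
    using a_step(3) incr_steps_eq[OF assms] by simp
  also have "\<dots> = aff_refl n (a (p2 c) - int n) (a (p2 c - 1))"
  proof (rule aff_refl_cong)
    show "a (p1 c - 1) mod int n = (a (p2 c) - int n) mod int n"
      using a_p1_pred_mod[OF assms] by (simp add: beta_def)
    show "a (p1 c) - a (p1 c - 1) = a (p2 c - 1) - (a (p2 c) - int n)"
      using gap_p1_p2[OF assms] by (simp add: gap_def)
  qed
  finally show ?thesis .
qed

lemma rs_p2:
  assumes "c \<in> {1..<int n}"
  shows "rs ! (p2 c - 1) = aff_refl n (a (p1 c) - int n) (a (p1 c - 1))"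
proof -
  have "rs ! (p2 c - 1) = aff_refl n (a (p2 c - 1)) (a (p2 c))"
    using a_step(3) incr_steps_eq[OF assms] by simp
  also have "\<dots> = aff_refl n (a (p1 c) - int n) (a (p1 c - 1))"
  proof (rule aff_refl_cong)
    show "a (p2 c - 1) mod int n = (a (p1 c) - int n) mod int n"
      using a_p2_pred_mod[OF assms] a_p1_mod[OF assms] by simp
    show "a (p2 c) - a (p2 c - 1) = a (p1 c - 1) - (a (p1 c) - int n)"
      using gap_p1_p2[OF assms] by (simp add: gap_def)
  qed
  finally show ?thesis .
qed

lemma owner_eq_if_residues_eq:
  assumes "1 \<le> l" and "l \<le> m" and "1 \<le> l'" and "l' \<le> m"
    and "{a (l' - 1) mod int n, a l' mod int n} = {a (l - 1) mod int n, a l mod int n}"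
  shows "owner l' = owner l"
proof -
  let ?y = "owner l"
  have y: "?y \<in> {1..<int n}"
    using owner_range[OF assms(1,2)] .
  have res: "{a (l' - 1) mod int n, a l' mod int n} = {?y mod int n, beta ?y mod int n}"
    using assms(5) step_residues[OF assms(1,2)] by simp
  then have y_res: "a (l' - 1) mod int n = ?y mod int n \<or> a l' mod int n = ?y mod int n"
    and beta_res: "a (l' - 1) mod int n = beta ?y mod int n \<or> a l' mod int n = beta ?y mod int n"
    by (metis doubleton_eq_iff)+
  have "\<not> (p1 ?y < l' \<and> l' < p2 ?y)"
    using residues_between[OF y, of l'] beta_res by blast
  moreover have "\<not> (l' < p1 ?y \<or> p2 ?y < l')"
    using residues_outside[OF y assms(3,4)] y_res by blast
  ultimately have "l' = p1 ?y \<or> l' = p2 ?y"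
    by linarith
  then have "l' \<in> incr_steps ?y"
    using incr_steps_eq(1)[OF y] by blast
  then show ?thesis
    using owner_eqI[OF y] by simp
qed

lemma class_step_between:
  assumes c: "c \<in> {1..<int n}" and "p1 c < j" and "j < p2 c" and "a j mod int n = c mod int n"
  shows "j = p2 (owner j)" and "p1 c < p1 (owner j)"
    and "a (p1 (owner j) - 1) mod int n = c mod int n"
proof -
  let ?y = "owner j"
  have j: "1 \<le> j" "j \<le> m"
    using incr_steps_eq[OF c] assms(2,3) by auto
  have y: "?y \<in> {1..<int n}"
    using owner_range[OF j] .
  have "?y \<noteq> c"
    using owner_step[OF j] assms(2,3) by auto
  then show j_p2: "j = p2 ?y"
    using owner_step[OF j] a_p1_mod[OF y] assms(4) c y by auto
  then have beta_y: "beta ?y mod int n = c mod int n"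
    using assms(4) by (simp add: beta_def)
  then show "a (p1 ?y - 1) mod int n = c mod int n"
    using a_p1_pred_mod[OF y] by simp
  have "p1 ?y \<noteq> p1 c"
    using owner_p1[OF y] owner_p1[OF c] \<open>?y \<noteq> c\<close> by metis
  moreover have "\<not> p1 ?y < p1 c"
    using residues_between[OF y, of "p1 c"] a_p1_mod[OF c] beta_y assms(2) j_p2 by auto
  ultimately show "p1 c < p1 ?y"
    by simp
qed

lemma incr_intervals_nested:
  assumes "c \<in> {1..<int n}" and "p1 c < l" and "l < p2 c"
  shows "p1 c < p1 (owner l) \<and> p2 (owner l) < p2 c"
  using assms
proof (induction "p2 c - p1 c" arbitrary: c l rule: less_induct)
  case less
  \<comment> \<open>the least position in [l, p2 c) carrying the class c ends a child interval
    containing l\<close>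
  define Z where "Z = {j. l \<le> j \<and> j < p2 c \<and> a j mod int n = c mod int n}"
  have "p2 c - 1 \<in> Z"
    using less.prems a_p2_pred_mod by (auto simp: Z_def)
  then have fin: "finite Z" and nonempty: "Z \<noteq> {}"
    by (auto simp: Z_def)
  define j where "j = Min Z"
  define y where "y = owner j"
  have "j \<in> Z"
    using Min_in[OF fin nonempty] by (simp add: j_def)
  then have j: "l \<le> j" "j < p2 c" "a j mod int n = c mod int n"
    by (simp_all add: Z_def)
  note child = class_step_between[OF less.prems(1) _ j(2,3), folded y_def]
  have j_p2: "j = p2 y" and p1_less: "p1 c < p1 y" and "a (p1 y - 1) mod int n = c mod int n"
    using child less.prems(2) j(1) by auto
  have y: "y \<in> {1..<int n}"
    using owner_range[of j] less.prems j incr_steps_eq[OF less.prems(1)] by (simp add: y_def)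
  have "p1 y - 1 \<notin> Z"
    using Min_le[OF fin, of "p1 y - 1"] j_p2 incr_steps_eq[OF y] by (auto simp: j_def)
  then have "p1 y \<le> l"
    using \<open>a (p1 y - 1) mod int n = c mod int n\<close> p1_less j(2) j_p2 incr_steps_eq[OF y]
    by (auto simp: Z_def)
  then consider "l = p1 y \<or> l = p2 y" | "p1 y < l" "l < p2 y"
    using j(1) j_p2 by linarith
  then show ?case
  proof cases
    case 1
    then have "owner l = y"
      using owner_p1[OF y] owner_p2[OF y] by auto
    then show ?thesis
      using p1_less j(2) j_p2 by simp
  next
    case 2
    have "p2 y - p1 y < p2 c - p1 c"
      using p1_less j(2) j_p2 incr_steps_eq(3)[OF y] by linarith
    then show ?thesis
      using less.hyps[OF _ y 2] p1_less j(2) j_p2 by simp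
  qed
qed

lemma between_iff_partner_between:
  assumes "k \<in> {1..<int n}" and "1 \<le> l" and "l \<le> m"
  shows "p1 k < l \<and> l < p2 k \<longleftrightarrow>
    (\<exists>l'. p1 k < l' \<and> l' < p2 k \<and> rs ! (l' - 1) = aff_refl n (a l - int n) (a (l - 1)))"
  (is "?between \<longleftrightarrow> ?partner")
proof
  assume between: ?between
  let ?y = "owner l"
  have y: "?y \<in> {1..<int n}"
    using owner_range[OF assms(2,3)] .
  have nested: "p1 k < p1 ?y" "p2 ?y < p2 k"
    using incr_intervals_nested[OF assms(1)] between by auto
  from owner_step[OF assms(2,3)] show ?partner
  proof
    assume "l = p1 ?y"
    then show ?thesis
      using rs_p2[OF y] nested incr_steps_eq[OF y] by (intro exI[of _ "p2 ?y"]) auto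
  next
    assume "l = p2 ?y"
    then show ?thesis
      using rs_p1[OF y] nested incr_steps_eq[OF y] by (intro exI[of _ "p1 ?y"]) auto
  qed
next
  assume ?partner
  then obtain l' where l': "p1 k < l'" "l' < p2 k"
    and refl: "rs ! (l' - 1) = aff_refl n (a l - int n) (a (l - 1))"
    by blast
  have l'_range: "1 \<le> l'" "l' \<le> m"
    using l' incr_steps_eq[OF assms(1)] by auto
  have "(a l - int n) mod int n = a l mod int n"
    by (simp add: mod_diff_right_eq[symmetric])
  then have "{a (l' - 1) mod int n, a l' mod int n} = {a (l - 1) mod int n, a l mod int n}"
    using aff_refl_residues_eq[OF a_step(2)[OF l'_range], of "a l - int n" "a (l - 1)"]
      a_step(2)[OF assms(2,3)] a_step(3)[OF l'_range] refl
    by (auto simp: insert_commute)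
  then have "owner l' = owner l"
    using owner_eq_if_residues_eq[OF assms(2,3) l'_range] by simp
  then have "p1 k < p1 (owner l)" "p2 (owner l) < p2 k"
    using incr_intervals_nested[OF assms(1) l'] by auto
  then show ?between
    using owner_step[OF assms(2,3)] incr_steps_eq[OF owner_range[OF assms(2,3)]] by auto
qed

end

theorem corollary3p11:
  fixes n :: nat and rs :: "(int \<Rightarrow> int) list" and a :: "nat \<Rightarrow> int" and k :: int
  assumes "n \<ge> 2"
    and "rs \<in> fact_lambda n"
    and "tree_like_wit n rs a"
    and "1 \<le> k" and "k \<le> int n - 1"
  shows "\<exists>p1 p2 \<beta>. 1 \<le> p1 \<and> p1 < p2 \<and> p2 \<le> 2 * n - 2
     \<and> {l \<in> {1..2 * n - 2}. increases rs l k} = {p1, p2}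
     \<and> {a (p1 - 1) mod int n, a p1 mod int n} = {k mod int n, \<beta> mod int n}
     \<and> {a (p2 - 1) mod int n, a p2 mod int n} = {k mod int n, \<beta> mod int n}
     \<and> (\<forall>l \<in> {1..2 * n - 2}. (l < p1 \<or> p2 < l) \<longrightarrow>
            a (l - 1) mod int n \<noteq> k mod int n \<and> a l mod int n \<noteq> k mod int n)
     \<and> (\<forall>l \<in> {1..2 * n - 2}. (p1 < l \<and> l < p2) \<longrightarrow>
            a (l - 1) mod int n \<noteq> \<beta> mod int n \<and> a l mod int n \<noteq> \<beta> mod int n)
     \<and> (\<forall>l \<in> {1..2 * n - 2}. (p1 < l \<and> l < p2) \<longleftrightarrow>
            (\<exists>m. p1 < m \<and> m < p2 \<and> rs ! (m - 1) = aff_refl n (a l - int n) (a (l - 1))))"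
proof -
  interpret tree_like_factorization n rs a
    using assms(1-3) by unfold_locales
  have k: "k \<in> {1..<int n}"
    using assms(4,5) by simp
  note steps = incr_steps_eq[OF k]
  show ?thesis
  proof (intro exI conjI)
    show "1 \<le> p1 k" "p1 k < p2 k" "p2 k \<le> 2 * n - 2"
      using steps by simp_all
    show "{l \<in> {1..2 * n - 2}. increases rs l k} = {p1 k, p2 k}"
      using steps(1) by (simp add: incr_steps_def)
    show "{a (p1 k - 1) mod int n, a (p1 k) mod int n} = {k mod int n, beta k mod int n}"
      using step_residues[of "p1 k"] owner_p1[OF k] steps by simp
    show "{a (p2 k - 1) mod int n, a (p2 k) mod int n} = {k mod int n, beta k mod int n}"
      using step_residues[of "p2 k"] owner_p2[OF k] steps by simp
    show "\<forall>l \<in> {1..2 * n - 2}. (l < p1 k \<or> p2 k < l) \<longrightarrow>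
        a (l - 1) mod int n \<noteq> k mod int n \<and> a l mod int n \<noteq> k mod int n"
      using residues_outside[OF k] by simp
    show "\<forall>l \<in> {1..2 * n - 2}. (p1 k < l \<and> l < p2 k) \<longrightarrow>
        a (l - 1) mod int n \<noteq> beta k mod int n \<and> a l mod int n \<noteq> beta k mod int n"
      using residues_between[OF k] by simp
    show "\<forall>l \<in> {1..2 * n - 2}. (p1 k < l \<and> l < p2 k) \<longleftrightarrow>
        (\<exists>m. p1 k < m \<and> m < p2 k \<and> rs ! (m - 1) = aff_refl n (a l - int n) (a (l - 1)))"
      using between_iff_partner_between[OF k] by simp
  qed
qed

end
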